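(* Let $H$ be a torsion-free group, $I\subseteq H$ with $1_H\notin I$ and $I=I^{-1}$, and let $x\in N(H,I)$. Then $x$ is conjugate to $xz$ in $G(H,I)$ if and only if there exists $g\in H$ such that $|g^{-1}\cdot\mathrm{supp}(x)\cap I|$ is odd.
   Context: For a group $H$ and a subset $I\subseteq H$ with $1_H\notin I$ and $I=I^{-1}$, $G(H,I)$ is the group generated by $H$ together with elements $a,z$ subject to the relations of $H$, $z^2=a^2=1$, $z$ central, and $[a,hah^{-1}]=z^{\chi_I(h)}$ for all $h\in H$ (where $\chi_I$ is the indicator function of $I$). It is a central extension $1\to\{1,z\}\to G(H,I)\xrightarrow{\tau} C_2\wr H\to 1$, where $\tau$ kills $z$ and sends $a$ to the lamp generator at $1_H$; let $\pi:G(H,I)\to H$ be the projection killing $a$ and $z$. $N(H,I)=\pi^{-1}(1_H)=\tau^{-1}(\bigoplus_H C_2)$. For $x\in N(H,I)$, $\mathrm{supp}(x)\subseteq H$ is the (finite) support of $\tau(x)\in\bigoplus_H C_2$, viewed as a finitely supported function $H\to C_2$. For $c,x\in N(H,I)$ one has $[c,x]=z^{\varepsilon}$ with $\varepsilon\equiv\sum_{g\in\mathrm{supp}(c)}\sum_{h\in\mathrm{supp}(x)}\chi_I(g^{-1}h)\pmod 2$. *)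

theory Defs
  imports "HOL-Algebra.Group"
begin

text \<open>Generators of G(H,I): the elements of H, together with a and z.
  A letter is a generator together with a flag saying whether it is inverted.\<close>

datatype 'h gen = GH 'h | GA | GZ

type_synonym 'h word = "('h gen \<times> bool) list"

definition torsion_free :: "('h, 'm) monoid_scheme \<Rightarrow> bool" where
  "torsion_free H \<longleftrightarrow>
     (\<forall>h \<in> carrier H. \<forall>n::nat. n > 0 \<longrightarrow> h [^]\<^bsub>H\<^esub> n = \<one>\<^bsub>H\<^esub> \<longrightarrow> h = \<one>\<^bsub>H\<^esub>)"

definition gens :: "('h, 'm) monoid_scheme \<Rightarrow> 'h gen set" where
  "gens H = {GA, GZ} \<union> GH ` carrier H"

definition valid_word :: "('h, 'm) monoid_scheme \<Rightarrow> 'h word \<Rightarrow> bool" where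
  "valid_word H w \<longleftrightarrow> (\<forall>l \<in> set w. fst l \<in> gens H)"

text \<open>The commutator [a, h a h^-1] = a^-1 (h a h^-1)^-1 a (h a h^-1) as a word.\<close>
definition comm_word :: "'h \<Rightarrow> 'h word" where
  "comm_word h = [(GA,True),(GH h,False),(GA,True),(GH h,True),
                  (GA,False),(GH h,False),(GA,False),(GH h,True)]"

definition relators :: "('h, 'm) monoid_scheme \<Rightarrow> 'h set \<Rightarrow> 'h word set" where
  "relators H I =
     {[(GH g,False),(GH h,False),(GH (g \<otimes>\<^bsub>H\<^esub> h),True)] | g h. g \<in> carrier H \<and> h \<in> carrier H}
   \<union> {[(GZ,False),(GZ,False)], [(GA,False),(GA,False)]}
   \<union> {[(GZ,False),(x,False),(GZ,True),(x,True)] | x. x \<in> gens H}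
   \<union> {comm_word h @ (if h \<in> I then [(GZ,True)] else []) | h. h \<in> carrier H}"

inductive pres_eq :: "('h, 'm) monoid_scheme \<Rightarrow> 'h set \<Rightarrow> 'h word \<Rightarrow> 'h word \<Rightarrow> bool"
  for H I where
  refl: "valid_word H w \<Longrightarrow> pres_eq H I w w"
| sym: "pres_eq H I u v \<Longrightarrow> pres_eq H I v u"
| trans: "pres_eq H I u v \<Longrightarrow> pres_eq H I v w \<Longrightarrow> pres_eq H I u w"
| cancel: "valid_word H u \<Longrightarrow> valid_word H v \<Longrightarrow> x \<in> gens H \<Longrightarrow>
           pres_eq H I (u @ [(x,b),(x,\<not>b)] @ v) (u @ v)"
| relator: "valid_word H u \<Longrightarrow> valid_word H v \<Longrightarrow> r \<in> relators H I \<Longrightarrow>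
           pres_eq H I (u @ r @ v) (u @ v)"

definition cls :: "('h, 'm) monoid_scheme \<Rightarrow> 'h set \<Rightarrow> 'h word \<Rightarrow> 'h word set" where
  "cls H I w = {w'. pres_eq H I w w'}"

definition rep :: "'h word set \<Rightarrow> 'h word" where
  "rep A = (SOME w. w \<in> A)"

definition Gpres :: "('h, 'm) monoid_scheme \<Rightarrow> 'h set \<Rightarrow> 'h word set monoid" where
  "Gpres H I = \<lparr> carrier = {cls H I w | w. valid_word H w},
                 mult = (\<lambda>A B. cls H I (rep A @ rep B)),
                 one = cls H I [] \<rparr>"

definition zG :: "('h, 'm) monoid_scheme \<Rightarrow> 'h set \<Rightarrow> 'h word set" where
  "zG H I = cls H I [(GZ,False)]"

fun letter_val :: "('h, 'm) monoid_scheme \<Rightarrow> 'h gen \<times> bool \<Rightarrow> 'h" where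
  "letter_val H (GH h, False) = h"
| "letter_val H (GH h, True) = inv\<^bsub>H\<^esub> h"
| "letter_val H (GA, _) = \<one>\<^bsub>H\<^esub>"
| "letter_val H (GZ, _) = \<one>\<^bsub>H\<^esub>"

definition word_pi :: "('h, 'm) monoid_scheme \<Rightarrow> 'h word \<Rightarrow> 'h" where
  "word_pi H w = foldr (\<lambda>l acc. letter_val H l \<otimes>\<^bsub>H\<^esub> acc) w \<one>\<^bsub>H\<^esub>"

definition piG :: "('h, 'm) monoid_scheme \<Rightarrow> 'h word set \<Rightarrow> 'h" where
  "piG H x = word_pi H (rep x)"

definition Npres :: "('h, 'm) monoid_scheme \<Rightarrow> 'h set \<Rightarrow> 'h word set set" where
  "Npres H I = {x \<in> carrier (Gpres H I). piG H x = \<one>\<^bsub>H\<^esub>}"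

text \<open>Support of tau(x): in C_2 wr H (with (f,h)(f',h') = (f + h.f', hh')), an
  occurrence of a^(+-1) whose preceding prefix projects to p contributes the
  lamp at p.\<close>
definition word_supp :: "('h, 'm) monoid_scheme \<Rightarrow> 'h word \<Rightarrow> 'h set" where
  "word_supp H w = {p \<in> carrier H.
     odd (card {i. i < length w \<and> fst (w ! i) = GA \<and> word_pi H (take i w) = p})}"

definition supp :: "('h, 'm) monoid_scheme \<Rightarrow> 'h word set \<Rightarrow> 'h set" where
  "supp H x = word_supp H (rep x)"

end

theory Submission
  imports Defs "HOL-Algebra.Coset"
begin

text \<open>
  Conjugating \<open>x \<in> N(H,I)\<close> by the lamp \<open>a\<^sub>g = g a g\<^sup>-\<^sup>1\<close> moves \<open>a\<^sub>g\<close> past every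
  \<open>a\<close> of \<open>x\<close>, and each lamp \<open>p \<in> supp(x)\<close> with \<open>g\<^sup>-\<^sup>1p \<in> I\<close> contributes a factor \<open>z\<close>;
  an odd count therefore conjugates \<open>x\<close> to \<open>xz\<close>.

  For the converse one has to compute with \<open>z\<close> inside a group given only by a
  presentation. We let words act on triples (lamp set, position in \<open>H\<close>, bit), where
  lighting a lamp flips the bit according to a 2-cocycle built from an arbitrary
  tournament on \<open>H\<close>; the action respects the relations, so it is an invariant of
  elements. If \<open>c x c\<^sup>-\<^sup>1 = xz\<close>, comparing the actions shows that left translation
  by \<open>\<pi>(c)\<close> fixes the finite set \<open>supp(x)\<close>, so \<open>\<pi>(c) = 1\<close> by torsion-freeness (or the
  support is empty), and then the bit of the commutator is the parity of the pairs
  \<open>(g, p) \<in> supp(c) \<times> supp(x)\<close> with \<open>g\<^sup>-\<^sup>1p \<in> I\<close>. Some \<open>g \<in> supp(c)\<close> then has an odd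
  number of such \<open>p\<close>.
\<close>

section \<open>Parities of finite relations\<close>

definition odd_pairs :: "('a \<Rightarrow> 'b \<Rightarrow> bool) \<Rightarrow> 'a set \<Rightarrow> 'b set \<Rightarrow> bool" where
  "odd_pairs R U V \<longleftrightarrow> odd (card ((U \<times> V) \<inter> {(g, p). R g p}))"

lemma odd_card_sym_diff:
  assumes "finite A" "finite B"
  shows "odd (card (sym_diff A B)) \<longleftrightarrow> odd (card A) \<noteq> odd (card B)"
proof -
  have "card (sym_diff A B \<union> (A \<inter> B)) = card (sym_diff A B) + card (A \<inter> B)"
    using assms by (intro card_Un_disjoint) auto
  moreover have "sym_diff A B \<union> (A \<inter> B) = A \<union> B"
    by blast
  ultimately have "card A + card B = card (sym_diff A B) + 2 * card (A \<inter> B)"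
    using card_Un_Int[OF assms] by simp
  then show ?thesis
    by (metis even_add even_mult_iff even_numeral)
qed

lemma odd_card_Un_disjoint:
  "finite A \<Longrightarrow> finite B \<Longrightarrow> A \<inter> B = {} \<Longrightarrow> odd (card (A \<union> B)) \<longleftrightarrow> odd (card A) \<noteq> odd (card B)"
  by (simp add: card_Un_disjoint)

lemma odd_card_filter_neq:
  assumes "finite A"
  shows "odd (card {x \<in> A. P x \<noteq> Q x}) \<longleftrightarrow> odd (card {x \<in> A. P x}) \<noteq> odd (card {x \<in> A. Q x})"
proof -
  have "{x \<in> A. P x \<noteq> Q x} = sym_diff {x \<in> A. P x} {x \<in> A. Q x}"
    by blast
  then show ?thesis
    using assms by (simp add: odd_card_sym_diff)
qed

lemma odd_card_filter_sym_diff_singleton: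
  "finite S \<Longrightarrow> odd (card {p \<in> sym_diff S {q}. P p}) \<longleftrightarrow> odd (card {p \<in> S. P p}) \<noteq> P q"
proof -
  assume "finite S"
  have "{p \<in> sym_diff S {q}. P p} = sym_diff {p \<in> S. P p} {p \<in> {q}. P p}"
    by blast
  moreover have "odd (card {p \<in> {q}. P p}) \<longleftrightarrow> P q"
    by (simp add: Collect_conv_if)
  ultimately show ?thesis
    using \<open>finite S\<close> by (simp add: odd_card_sym_diff)
qed

lemma odd_pairs_empty [simp]: "\<not> odd_pairs R {} V" "\<not> odd_pairs R U {}"
  by (simp_all add: odd_pairs_def)

lemma odd_pairs_cong:
  "(\<And>g p. g \<in> U \<Longrightarrow> p \<in> V \<Longrightarrow> R g p \<longleftrightarrow> R' g p) \<Longrightarrow> odd_pairs R U V \<longleftrightarrow> odd_pairs R' U V"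
  unfolding odd_pairs_def by (rule arg_cong[where f="\<lambda>X. odd (card X)"]) blast

lemma odd_pairs_sym_diff_left:
  assumes "finite A" "finite B" "finite V"
  shows "odd_pairs R (sym_diff A B) V \<longleftrightarrow> odd_pairs R A V \<noteq> odd_pairs R B V"
proof -
  have "(sym_diff A B \<times> V) \<inter> {(g, p). R g p}
      = sym_diff ((A \<times> V) \<inter> {(g, p). R g p}) ((B \<times> V) \<inter> {(g, p). R g p})"
    by blast
  then show ?thesis
    using assms by (simp add: odd_pairs_def odd_card_sym_diff)
qed

lemma odd_pairs_sym_diff_right:
  assumes "finite U" "finite A" "finite B"
  shows "odd_pairs R U (sym_diff A B) \<longleftrightarrow> odd_pairs R U A \<noteq> odd_pairs R U B"
proof -
  have "(U \<times> sym_diff A B) \<inter> {(g, p). R g p}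
      = sym_diff ((U \<times> A) \<inter> {(g, p). R g p}) ((U \<times> B) \<inter> {(g, p). R g p})"
    by blast
  then show ?thesis
    using assms by (simp add: odd_pairs_def odd_card_sym_diff)
qed

lemma odd_pairs_singleton_right: "odd_pairs R U {p} \<longleftrightarrow> odd (card {g \<in> U. R g p})"
proof -
  have "(U \<times> {p}) \<inter> {(g, p). R g p} = (\<lambda>g. (g, p)) ` {g \<in> U. R g p}"
    by blast
  then show ?thesis
    by (simp add: odd_pairs_def card_image inj_on_def)
qed

lemma odd_pairs_singleton [simp]: "odd_pairs R {g} {p} \<longleftrightarrow> R g p"
  by (simp add: odd_pairs_singleton_right Collect_conv_if)

lemma odd_pairs_swap: "odd_pairs R B A \<longleftrightarrow> odd_pairs (\<lambda>g p. R p g) A B"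
proof -
  have "(B \<times> A) \<inter> {(g, p). R g p} = prod.swap ` ((A \<times> B) \<inter> {(g, p). R p g})"
    by force
  then show ?thesis
    by (simp add: odd_pairs_def card_image)
qed

lemma odd_pairs_disj:
  assumes "finite U" "finite V" "\<And>g p. g \<in> U \<Longrightarrow> p \<in> V \<Longrightarrow> \<not> (R g p \<and> R' g p)"
  shows "odd_pairs (\<lambda>g p. R g p \<or> R' g p) U V \<longleftrightarrow> odd_pairs R U V \<noteq> odd_pairs R' U V"
proof -
  have "(U \<times> V) \<inter> {(g, p). R g p \<or> R' g p}
      = ((U \<times> V) \<inter> {(g, p). R g p}) \<union> ((U \<times> V) \<inter> {(g, p). R' g p})"
    by blast
  then show ?thesis
    using assms by (simp add: odd_pairs_def odd_card_Un_disjoint disjoint_iff)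
qed

lemma odd_pairs_diagonal_sym_diff_singleton:
  assumes "finite S" "\<not> R q q"
  shows "odd_pairs R (sym_diff S {q}) (sym_diff S {q})
    \<longleftrightarrow> odd_pairs R S S \<noteq> (odd (card {g \<in> S. R g q}) \<noteq> odd (card {h \<in> S. R q h}))"
proof -
  define P where "P X = (X \<times> X) \<inter> {(g, p). R g p}" for X
  define A where "A = {g \<in> S. R g q}"
  define B where "B = {h \<in> S. R q h}"
  have "P (sym_diff S {q}) = sym_diff (P S) ((\<lambda>g. (g, q)) ` A \<union> Pair q ` B)"
    using assms(2) by (auto simp: P_def A_def B_def)
  moreover have "(\<lambda>g. (g, q)) ` A \<inter> Pair q ` B = {}"
    using assms(2) by (auto simp: A_def B_def)
  moreover have "finite A" "finite B" "finite (P S)"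
    using assms(1) by (auto simp: A_def B_def P_def)
  ultimately show ?thesis
    by (simp add: odd_pairs_def P_def[symmetric] odd_card_sym_diff odd_card_Un_disjoint
        card_image inj_on_def flip: A_def B_def)
qed

lemma odd_pairs_imp_odd_row:
  assumes "finite U" "finite V" "odd_pairs R U V"
  shows "\<exists>g \<in> U. odd (card {p \<in> V. R g p})"
proof (rule ccontr)
  assume "\<not> ?thesis"
  then have "even (\<Sum>g \<in> U. card {p \<in> V. R g p})"
    by (simp add: dvd_sum)
  moreover have "(U \<times> V) \<inter> {(g, p). R g p} = Sigma U (\<lambda>g. {p \<in> V. R g p})"
    by blast
  ultimately show False
    using assms by (simp add: odd_pairs_def card_SigmaI)
qed

text \<open>The cocycle of the model only needs a tournament (of two distinct elements exactly
  one precedes the other); choice provides one on every type.\<close>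
definition prec :: "'a \<Rightarrow> 'a \<Rightarrow> bool" where
  "prec g h \<longleftrightarrow> (SOME x. x \<in> {g, h}) = g"

lemma prec_tournament: "g \<noteq> h \<Longrightarrow> prec g h \<longleftrightarrow> \<not> prec h g"
proof -
  assume "g \<noteq> h"
  have "(SOME x. x \<in> {g, h}) \<in> {g, h}"
    by (rule someI[of _ g]) simp
  moreover have "{h, g} = {g, h}"
    by blast
  ultimately show ?thesis
    using \<open>g \<noteq> h\<close> by (auto simp: prec_def)
qed

lemma prec_total: "prec g h \<or> prec h g"
  using prec_tournament[of g h] by (cases "g = h") (auto simp: prec_def)

lemma odd_pairs_tournament_split:
  assumes "finite A" "finite B"
    and Q_irrefl: "\<And>g p. g \<in> A \<Longrightarrow> p \<in> B \<Longrightarrow> Q g p \<Longrightarrow> g \<noteq> p"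
    and Q_sym: "\<And>g p. g \<in> A \<Longrightarrow> p \<in> B \<Longrightarrow> Q p g \<longleftrightarrow> Q g p"
  shows "odd_pairs (\<lambda>g p. prec p g \<and> Q g p) A B \<noteq> odd_pairs (\<lambda>g p. prec p g \<and> Q g p) B A
    \<longleftrightarrow> odd_pairs Q A B"
proof -
  have "odd_pairs (\<lambda>g p. prec p g \<and> Q g p) B A \<longleftrightarrow> odd_pairs (\<lambda>g p. prec g p \<and> Q g p) A B"
    using Q_sym by (subst odd_pairs_swap) (intro odd_pairs_cong, auto)
  moreover have "odd_pairs Q A B \<longleftrightarrow> odd_pairs (\<lambda>g p. prec p g \<and> Q g p \<or> prec g p \<and> Q g p) A B"
    by (intro odd_pairs_cong) (metis prec_total)
  moreover have "\<not> ((prec p g \<and> Q g p) \<and> (prec g p \<and> Q g p))" if "g \<in> A" "p \<in> B" for g p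
    using that Q_irrefl[of g p] prec_tournament[of g p] by blast
  ultimately show ?thesis
    using assms(1,2) by (simp add: odd_pairs_disj)
qed

section \<open>Commutators and translates in groups\<close>

lemma (in group) commute_if_commutator_one:
  assumes "a \<in> carrier G" "b \<in> carrier G" "a \<otimes> b \<otimes> inv a \<otimes> inv b = \<one>"
  shows "a \<otimes> b = b \<otimes> a"
proof -
  have ab_ba: "(a \<otimes> b) \<otimes> inv (b \<otimes> a) = \<one>"
    using assms by (simp add: inv_mult_group m_assoc)
  have "a \<otimes> b = (a \<otimes> b) \<otimes> (inv (b \<otimes> a) \<otimes> (b \<otimes> a))"
    using assms(1,2) by simp
  also have "\<dots> = b \<otimes> a"
    using assms(1,2) by (simp only: m_assoc[symmetric] ab_ba inv_closed m_closed l_one)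
  finally show ?thesis .
qed

lemma (in group) inv_commute:
  assumes "x \<in> carrier G" "y \<in> carrier G" "x \<otimes> y = y \<otimes> x"
  shows "inv x \<otimes> y = y \<otimes> inv x"
proof -
  have "y \<otimes> inv x = inv x \<otimes> (x \<otimes> y) \<otimes> inv x"
    using assms(1,2) by (simp add: m_assoc[symmetric])
  also have "\<dots> = inv x \<otimes> (y \<otimes> x) \<otimes> inv x"
    by (simp only: assms(3))
  also have "\<dots> = inv x \<otimes> y"
    using assms(1,2) by (simp add: m_assoc)
  finally show ?thesis
    by simp
qed

lemma (in group) inv_mult_cancel_left [simp]:
  "x \<in> carrier G \<Longrightarrow> y \<in> carrier G \<Longrightarrow> inv x \<otimes> (x \<otimes> y) = y"
  by (simp add: m_assoc[symmetric])

lemma (in group) mult_inv_cancel_left [simp]: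
  "x \<in> carrier G \<Longrightarrow> y \<in> carrier G \<Longrightarrow> x \<otimes> (inv x \<otimes> y) = y"
  by (simp add: m_assoc[symmetric])

lemma (in group) finite_lcos_fixed:
  assumes "torsion_free G" and S: "finite S" "S \<subseteq> carrier G" and k: "k \<in> carrier G"
    and "S \<noteq> {}" and fixed: "k <# S = S"
  shows "k = \<one>"
proof -
  obtain s where s: "s \<in> S"
    using \<open>S \<noteq> {}\<close> by blast
  define f where "f n = k [^] (n::nat) \<otimes> s" for n
  have orbit: "f n \<in> S" for n
  proof (induction n)
    case 0
    then show ?case
      using s S by (auto simp: f_def)
  next
    case (Suc n)
    then have "k \<otimes> f n \<in> k <# S"
      by (auto simp: l_coset_def)
    moreover have "k \<otimes> f n = f (Suc n)"
      using s S k by (auto simp: f_def m_assoc[symmetric] nat_pow_Suc2[OF k, symmetric])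
    ultimately show ?case
      using fixed by simp
  qed
  have s_carrier: "s \<in> carrier G"
    using s S by blast
  have "\<not> inj f"
    using inj_on_finite[of f UNIV S] orbit S(1) by auto
  then obtain m n where "f m = f n" "m \<noteq> n"
    unfolding inj_def by blast
  then obtain m n where "f m = f n" "m < n"
    by (metis linorder_neqE_nat)
  then have pow_eq: "k [^] m = k [^] n"
    using k s_carrier by (simp add: f_def)
  have "k [^] m \<otimes> k [^] (n - m) = k [^] n"
    using k \<open>m < n\<close> by (simp add: nat_pow_mult)
  also have "\<dots> = k [^] m \<otimes> \<one>"
    using k by (simp add: pow_eq)
  finally have "k [^] (n - m) = \<one>"
    using k by simp
  then show ?thesis
    using assms(1) k \<open>m < n\<close> unfolding torsion_free_def by (meson zero_less_diff)
qed

lemma finite_lcos [simp]: "finite S \<Longrightarrow> finite (k <#\<^bsub>G\<^esub> S)"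
  by (simp add: l_coset_def)

lemma (in group) lcos_sym_diff_singleton:
  "S \<subseteq> carrier G \<Longrightarrow> q \<in> carrier G \<Longrightarrow> k \<in> carrier G \<Longrightarrow>
    k <# sym_diff S {q} = sym_diff (k <# S) {k \<otimes> q}"
  by (auto simp: l_coset_def subset_eq)

lemma (in group) card_translate_Int:
  assumes "g \<in> carrier G" "S \<subseteq> carrier G"
  shows "card ((\<lambda>s. g \<otimes> s) ` S \<inter> I) = card {p \<in> S. g \<otimes> p \<in> I}"
proof -
  have "(\<lambda>s. g \<otimes> s) ` S \<inter> I = (\<lambda>s. g \<otimes> s) ` {p \<in> S. g \<otimes> p \<in> I}"
    by blast
  moreover have "inj_on (\<lambda>s. g \<otimes> s) S"
    using assms by (auto simp: inj_on_def subset_eq)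
  ultimately show ?thesis
    by (simp add: card_image inj_on_subset)
qed

section \<open>The presented group\<close>

lemma valid_word_append [simp]: "valid_word H (u @ v) \<longleftrightarrow> valid_word H u \<and> valid_word H v"
  by (auto simp: valid_word_def)

lemma valid_word_Cons [simp]: "valid_word H (l # w) \<longleftrightarrow> fst l \<in> gens H \<and> valid_word H w"
  by (simp add: valid_word_def)

lemma valid_word_Nil [simp]: "valid_word H []"
  by (simp add: valid_word_def)

lemma mem_gens [simp]: "GA \<in> gens H" "GZ \<in> gens H" "GH h \<in> gens H \<longleftrightarrow> h \<in> carrier H"
  by (auto simp: gens_def)

definition inv_word :: "'h word \<Rightarrow> 'h word" where
  "inv_word w = rev (map (\<lambda>(x, b). (x, \<not> b)) w)"

lemma valid_inv_word [simp]: "valid_word H (inv_word w) \<longleftrightarrow> valid_word H w"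
  by (auto simp: inv_word_def valid_word_def)

locale presentation =
  fixes H :: "('h, 'm) monoid_scheme" and I :: "'h set"
  assumes group_H: "group H"
begin

sublocale H: group H
  by (rule group_H)

lemma relator_valid: "r \<in> relators H I \<Longrightarrow> valid_word H r"
  by (auto simp: relators_def comm_word_def)

lemma pres_eq_valid: "pres_eq H I u v \<Longrightarrow> valid_word H u \<and> valid_word H v"
  by (induction rule: pres_eq.induct) (auto dest: relator_valid)

lemma pres_eq_append_left: "pres_eq H I u v \<Longrightarrow> valid_word H w \<Longrightarrow> pres_eq H I (w @ u) (w @ v)"
proof (induction rule: pres_eq.induct)
  case (cancel u v x b)
  then show ?case
    using pres_eq.cancel[where H=H and I=I and u="w @ u" and v=v and x=x and b=b] by simp
next
  case (relator u v r)
  then show ?case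
    using pres_eq.relator[where H=H and I=I and u="w @ u" and v=v and r=r] by simp
qed (auto intro: pres_eq.intros)

lemma pres_eq_append_right: "pres_eq H I u v \<Longrightarrow> valid_word H w \<Longrightarrow> pres_eq H I (u @ w) (v @ w)"
proof (induction rule: pres_eq.induct)
  case (cancel u v x b)
  then show ?case
    using pres_eq.cancel[where H=H and I=I and u=u and v="v @ w" and x=x and b=b] by simp
next
  case (relator u v r)
  then show ?case
    using pres_eq.relator[where H=H and I=I and u=u and v="v @ w" and r=r] by simp
qed (auto intro: pres_eq.intros)

lemma pres_eq_append: "pres_eq H I u u' \<Longrightarrow> pres_eq H I v v' \<Longrightarrow> pres_eq H I (u @ v) (u' @ v')"
  by (meson pres_eq.trans pres_eq_append_left pres_eq_append_right pres_eq_valid)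

lemma cls_eq_iff: "valid_word H w \<Longrightarrow> cls H I w = cls H I w' \<longleftrightarrow> pres_eq H I w w'"
  unfolding cls_def by (blast intro: pres_eq.refl pres_eq.sym pres_eq.trans)

lemma cls_eqI: "pres_eq H I w w' \<Longrightarrow> cls H I w = cls H I w'"
  using cls_eq_iff pres_eq_valid by blast

lemma pres_eq_rep_cls: "valid_word H w \<Longrightarrow> pres_eq H I w (rep (cls H I w))"
  unfolding rep_def cls_def mem_Collect_eq by (rule someI[where x=w]) (rule pres_eq.refl)

lemma valid_rep_cls: "valid_word H w \<Longrightarrow> valid_word H (rep (cls H I w))"
  using pres_eq_rep_cls pres_eq_valid by blast

lemma cls_rep_cls: "valid_word H w \<Longrightarrow> cls H I (rep (cls H I w)) = cls H I w"
  by (metis cls_eqI pres_eq.sym pres_eq_rep_cls)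

lemma carrier_Gpres: "carrier (Gpres H I) = {cls H I w | w. valid_word H w}"
  by (simp add: Gpres_def)

lemma one_Gpres: "\<one>\<^bsub>Gpres H I\<^esub> = cls H I []"
  by (simp add: Gpres_def)

lemma mult_Gpres:
  "valid_word H u \<Longrightarrow> valid_word H v \<Longrightarrow> cls H I u \<otimes>\<^bsub>Gpres H I\<^esub> cls H I v = cls H I (u @ v)"
  unfolding Gpres_def by (auto intro!: cls_eqI pres_eq_append pres_eq_rep_cls[THEN pres_eq.sym])

lemma pres_eq_inv_word_append: "valid_word H w \<Longrightarrow> pres_eq H I (inv_word w @ w) []"
proof (induction w rule: rev_induct)
  case Nil
  then show ?case
    by (simp add: inv_word_def pres_eq.refl)
next
  case (snoc l w)
  obtain x b where l: "l = (x, b)"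
    by force
  have valid: "valid_word H w" "x \<in> gens H"
    using snoc.prems l by auto
  have "inv_word (w @ [l]) @ w @ [l] = [(x, \<not> b)] @ (inv_word w @ w) @ [(x, b)]"
    by (simp add: inv_word_def l)
  moreover have "pres_eq H I ([(x, \<not> b)] @ (inv_word w @ w) @ [(x, b)]) ([(x, \<not> b)] @ [] @ [(x, b)])"
    using snoc valid by (intro pres_eq_append pres_eq.refl) auto
  moreover have "pres_eq H I ([] @ [(x, \<not> b), (x, \<not> \<not> b)] @ []) ([] @ [])"
    using valid by (intro pres_eq.cancel) auto
  ultimately show ?case
    by (auto intro: pres_eq.trans)
qed

lemma group_Gpres: "group (Gpres H I)"
proof (rule groupI)
  fix x
  assume "x \<in> carrier (Gpres H I)"
  then obtain w where w: "x = cls H I w" "valid_word H w"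
    by (auto simp: carrier_Gpres)
  show "\<exists>y \<in> carrier (Gpres H I). y \<otimes>\<^bsub>Gpres H I\<^esub> x = \<one>\<^bsub>Gpres H I\<^esub>"
  proof
    show "cls H I (inv_word w) \<in> carrier (Gpres H I)"
      using w by (auto simp: carrier_Gpres)
    show "cls H I (inv_word w) \<otimes>\<^bsub>Gpres H I\<^esub> x = \<one>\<^bsub>Gpres H I\<^esub>"
      using w by (simp add: mult_Gpres one_Gpres cls_eqI pres_eq_inv_word_append)
  qed
qed (force simp: carrier_Gpres mult_Gpres one_Gpres)+

sublocale G: group "Gpres H I"
  by (rule group_Gpres)

lemma letter_val_closed:
  assumes "fst l \<in> gens H"
  shows "letter_val H l \<in> carrier H"
proof (cases l)
  case (Pair x b)
  then show ?thesis
    using assms by (cases x; cases b) auto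
qed

lemma word_pi_Nil [simp]: "word_pi H [] = \<one>\<^bsub>H\<^esub>"
  by (simp add: word_pi_def)

lemma word_pi_closed: "valid_word H w \<Longrightarrow> word_pi H w \<in> carrier H"
  by (induction w) (auto simp: word_pi_def letter_val_closed)

lemma word_pi_append:
  "valid_word H u \<Longrightarrow> valid_word H v \<Longrightarrow> word_pi H (u @ v) = word_pi H u \<otimes>\<^bsub>H\<^esub> word_pi H v"
  by (induction u) (auto simp: word_pi_def H.m_assoc letter_val_closed word_pi_closed[unfolded word_pi_def])

lemma word_pi_snoc: "valid_word H (w @ [l]) \<Longrightarrow> word_pi H (w @ [l]) = word_pi H w \<otimes>\<^bsub>H\<^esub> letter_val H l"
  by (simp add: word_pi_append) (simp add: word_pi_def letter_val_closed)

lemma word_supp_Nil [simp]: "word_supp H [] = {}"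
  by (simp add: word_supp_def)

lemma word_supp_subset: "word_supp H w \<subseteq> carrier H"
  by (auto simp: word_supp_def)

lemma word_supp_snoc:
  assumes "valid_word H (w @ [l])"
  shows "word_supp H (w @ [l]) =
    (if fst l = GA then sym_diff (word_supp H w) {word_pi H w} else word_supp H w)"
proof -
  let ?pos = "\<lambda>w p. {i. i < length w \<and> fst (w ! i) = GA \<and> word_pi H (take i w) = p}"
  have "?pos (w @ [l]) p = ?pos w p \<union> (if fst l = GA \<and> word_pi H w = p then {length w} else {})" for p
    by (auto simp: nth_append less_Suc_eq)
  then have "odd (card (?pos (w @ [l]) p)) \<longleftrightarrow> odd (card (?pos w p)) \<noteq> (fst l = GA \<and> word_pi H w = p)" for p
    by (auto simp: card_insert_if)
  moreover have "word_pi H w \<in> carrier H"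
    using assms by (simp add: word_pi_closed)
  ultimately show ?thesis
    unfolding word_supp_def by auto
qed

lemma finite_word_supp: "valid_word H w \<Longrightarrow> finite (word_supp H w)"
  by (induction w rule: rev_induct) (simp_all add: word_supp_snoc)

end

section \<open>Lamps and the central element\<close>

context presentation
begin

definition aG :: "'h word set" where
  "aG = cls H I [(GA, False)]"

definition hG :: "'h \<Rightarrow> 'h word set" where
  "hG h = cls H I [(GH h, False)]"

definition lamp :: "'h \<Rightarrow> 'h word set" where
  "lamp g = hG g \<otimes>\<^bsub>Gpres H I\<^esub> aG \<otimes>\<^bsub>Gpres H I\<^esub> inv\<^bsub>Gpres H I\<^esub> (hG g)"

definition zG_pow :: "bool \<Rightarrow> 'h word set" where
  "zG_pow b = (if b then zG H I else \<one>\<^bsub>Gpres H I\<^esub>)"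

lemma cls_in_carrier [simp]: "valid_word H w \<Longrightarrow> cls H I w \<in> carrier (Gpres H I)"
  by (auto simp: carrier_Gpres)

lemma generators_in_carrier [simp]:
  "aG \<in> carrier (Gpres H I)" "zG H I \<in> carrier (Gpres H I)"
  "h \<in> carrier H \<Longrightarrow> hG h \<in> carrier (Gpres H I)"
  "h \<in> carrier H \<Longrightarrow> lamp h \<in> carrier (Gpres H I)" "zG_pow b \<in> carrier (Gpres H I)"
  by (simp_all add: aG_def zG_def hG_def lamp_def zG_pow_def)

lemma cls_append: "valid_word H u \<Longrightarrow> valid_word H v \<Longrightarrow> cls H I (u @ v) = cls H I u \<otimes>\<^bsub>Gpres H I\<^esub> cls H I v"
  by (simp add: mult_Gpres)

lemma cls_Cons2:
  "fst l \<in> gens H \<Longrightarrow> valid_word H (l' # w) \<Longrightarrow>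
    cls H I (l # l' # w) = cls H I [l] \<otimes>\<^bsub>Gpres H I\<^esub> cls H I (l' # w)"
  using cls_append[of "[l]" "l' # w"] by simp

lemma cls_relator: "r \<in> relators H I \<Longrightarrow> cls H I r = \<one>\<^bsub>Gpres H I\<^esub>"
  using pres_eq.relator[where H=H and I=I and u="[]" and v="[]" and r=r]
  by (simp add: cls_eqI one_Gpres)

lemma cls_inv_letter: "x \<in> gens H \<Longrightarrow> cls H I [(x, True)] = inv\<^bsub>Gpres H I\<^esub> cls H I [(x, False)]"
  using pres_eq.cancel[where H=H and I=I and u="[]" and v="[]" and x=x and b=True]
  by (intro G.inv_equality[symmetric]) (simp_all add: mult_Gpres cls_eqI one_Gpres)

lemma aG_square: "aG \<otimes>\<^bsub>Gpres H I\<^esub> aG = \<one>\<^bsub>Gpres H I\<^esub>"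
  using cls_relator[of "[(GA, False), (GA, False)]"] by (simp add: aG_def relators_def mult_Gpres)

lemma zG_square: "zG H I \<otimes>\<^bsub>Gpres H I\<^esub> zG H I = \<one>\<^bsub>Gpres H I\<^esub>"
  using cls_relator[of "[(GZ, False), (GZ, False)]"] by (simp add: zG_def relators_def mult_Gpres)

lemma cls_GA [simp]: "cls H I [(GA, b)] = aG"
  using cls_inv_letter[of GA] G.inv_equality[OF aG_square] by (cases b) (simp_all add: aG_def)

lemma cls_GZ [simp]: "cls H I [(GZ, b)] = zG H I"
  using cls_inv_letter[of GZ] G.inv_equality[OF zG_square] by (cases b) (simp_all add: zG_def)

lemma cls_GH [simp]:
  "h \<in> carrier H \<Longrightarrow> cls H I [(GH h, False)] = hG h"
  "h \<in> carrier H \<Longrightarrow> cls H I [(GH h, True)] = inv\<^bsub>Gpres H I\<^esub> hG h"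
  by (simp_all add: hG_def cls_inv_letter)

lemma hG_mult: "g \<in> carrier H \<Longrightarrow> h \<in> carrier H \<Longrightarrow> hG g \<otimes>\<^bsub>Gpres H I\<^esub> hG h = hG (g \<otimes>\<^bsub>H\<^esub> h)"
proof -
  assume carrier: "g \<in> carrier H" "h \<in> carrier H"
  then have "hG g \<otimes>\<^bsub>Gpres H I\<^esub> (hG h \<otimes>\<^bsub>Gpres H I\<^esub> inv\<^bsub>Gpres H I\<^esub> hG (g \<otimes>\<^bsub>H\<^esub> h)) = \<one>\<^bsub>Gpres H I\<^esub>"
    using cls_relator[of "[(GH g, False), (GH h, False), (GH (g \<otimes>\<^bsub>H\<^esub> h), True)]"]
    by (simp add: relators_def cls_Cons2)
  then show ?thesis
    using carrier by (simp add: G.m_assoc[symmetric] G.inv_solve_right')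
qed

lemma hG_one: "hG \<one>\<^bsub>H\<^esub> = \<one>\<^bsub>Gpres H I\<^esub>"
  using hG_mult[of "\<one>\<^bsub>H\<^esub>" "\<one>\<^bsub>H\<^esub>"] by simp

lemma hG_inv: "h \<in> carrier H \<Longrightarrow> hG (inv\<^bsub>H\<^esub> h) = inv\<^bsub>Gpres H I\<^esub> hG h"
  by (rule G.inv_equality[symmetric]) (simp_all add: hG_mult hG_one)

lemma zG_commutes_letter:
  assumes "x \<in> gens H"
  shows "zG H I \<otimes>\<^bsub>Gpres H I\<^esub> cls H I [(x, b)] = cls H I [(x, b)] \<otimes>\<^bsub>Gpres H I\<^esub> zG H I"
proof -
  let ?X = "cls H I [(x, False)]"
  have X: "?X \<in> carrier (Gpres H I)"
    using assms by simp
  have "zG H I \<otimes>\<^bsub>Gpres H I\<^esub> ?X \<otimes>\<^bsub>Gpres H I\<^esub> inv\<^bsub>Gpres H I\<^esub> zG H I \<otimes>\<^bsub>Gpres H I\<^esub> inv\<^bsub>Gpres H I\<^esub> ?X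
      = \<one>\<^bsub>Gpres H I\<^esub>"
    using cls_relator[of "[(GZ, False), (x, False), (GZ, True), (x, True)]"] assms
    by (simp add: relators_def cls_Cons2 cls_inv_letter zG_def G.m_assoc del: cls_GA cls_GZ cls_GH)
  then have commute: "zG H I \<otimes>\<^bsub>Gpres H I\<^esub> ?X = ?X \<otimes>\<^bsub>Gpres H I\<^esub> zG H I"
    using X by (intro G.commute_if_commutator_one) simp_all
  show ?thesis
  proof (cases b)
    case False
    then show ?thesis
      using commute by simp
  next
    case True
    then show ?thesis
      using G.inv_commute[OF X _ commute[symmetric]] assms
      by (simp add: cls_inv_letter del: cls_GA cls_GZ cls_GH)
  qed
qed

lemma zG_central:
  assumes "y \<in> carrier (Gpres H I)"
  shows "zG H I \<otimes>\<^bsub>Gpres H I\<^esub> y = y \<otimes>\<^bsub>Gpres H I\<^esub> zG H I"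
proof -
  have "zG H I \<otimes>\<^bsub>Gpres H I\<^esub> cls H I w = cls H I w \<otimes>\<^bsub>Gpres H I\<^esub> zG H I" if "valid_word H w" for w
    using that
  proof (induction w)
    case Nil
    then show ?case
      by (simp flip: one_Gpres)
  next
    case (Cons l w)
    obtain x b where l: "l = (x, b)"
      by force
    let ?L = "cls H I [l]" and ?W = "cls H I w"
    have carrier: "?L \<in> carrier (Gpres H I)" "?W \<in> carrier (Gpres H I)"
      using Cons.prems by simp_all
    have "zG H I \<otimes>\<^bsub>Gpres H I\<^esub> cls H I (l # w) = (zG H I \<otimes>\<^bsub>Gpres H I\<^esub> ?L) \<otimes>\<^bsub>Gpres H I\<^esub> ?W"
      using Cons.prems carrier cls_append[of "[l]" w] by (simp add: G.m_assoc)
    also have "\<dots> = ?L \<otimes>\<^bsub>Gpres H I\<^esub> (zG H I \<otimes>\<^bsub>Gpres H I\<^esub> ?W)"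
      using Cons.prems carrier zG_commutes_letter[of x b] by (simp add: l G.m_assoc)
    also have "\<dots> = cls H I (l # w) \<otimes>\<^bsub>Gpres H I\<^esub> zG H I"
      using Cons carrier cls_append[of "[l]" w] by (simp add: G.m_assoc)
    finally show ?case .
  qed
  then show ?thesis
    using assms by (auto simp: carrier_Gpres)
qed

lemma zG_pow_central: "y \<in> carrier (Gpres H I) \<Longrightarrow> zG_pow b \<otimes>\<^bsub>Gpres H I\<^esub> y = y \<otimes>\<^bsub>Gpres H I\<^esub> zG_pow b"
  by (simp add: zG_pow_def zG_central)

lemma zG_pow_mult: "zG_pow b \<otimes>\<^bsub>Gpres H I\<^esub> zG_pow b' = zG_pow (b \<noteq> b')"
  by (simp add: zG_pow_def zG_square)

lemma aG_cancel_left [simp]: "y \<in> carrier (Gpres H I) \<Longrightarrow> aG \<otimes>\<^bsub>Gpres H I\<^esub> (aG \<otimes>\<^bsub>Gpres H I\<^esub> y) = y"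
  by (simp add: G.m_assoc[symmetric] aG_square)

lemma lamp_square: "g \<in> carrier H \<Longrightarrow> lamp g \<otimes>\<^bsub>Gpres H I\<^esub> lamp g = \<one>\<^bsub>Gpres H I\<^esub>"
  by (simp add: lamp_def G.m_assoc)

lemma lamp_hG:
  assumes "g \<in> carrier H" "h \<in> carrier H"
  shows "lamp g \<otimes>\<^bsub>Gpres H I\<^esub> hG h = hG h \<otimes>\<^bsub>Gpres H I\<^esub> lamp (inv\<^bsub>H\<^esub> h \<otimes>\<^bsub>H\<^esub> g)"
proof -
  have "hG (inv\<^bsub>H\<^esub> h \<otimes>\<^bsub>H\<^esub> g) = inv\<^bsub>Gpres H I\<^esub> hG h \<otimes>\<^bsub>Gpres H I\<^esub> hG g"
    using assms by (simp add: hG_mult[symmetric] hG_inv)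
  then show ?thesis
    using assms by (simp add: lamp_def G.m_assoc G.inv_mult_group)
qed

lemma cls_comm_word: "h \<in> carrier H \<Longrightarrow> cls H I (comm_word h) = aG \<otimes>\<^bsub>Gpres H I\<^esub> (lamp h \<otimes>\<^bsub>Gpres H I\<^esub> (aG \<otimes>\<^bsub>Gpres H I\<^esub> lamp h))"
  by (simp add: comm_word_def cls_Cons2 lamp_def G.m_assoc)

lemma lamp_aG:
  assumes h: "h \<in> carrier H"
  shows "lamp h \<otimes>\<^bsub>Gpres H I\<^esub> aG = aG \<otimes>\<^bsub>Gpres H I\<^esub> lamp h \<otimes>\<^bsub>Gpres H I\<^esub> zG_pow (h \<in> I)"
proof -
  let ?c = "lamp h" and ?t = "zG_pow (h \<in> I)"
  have "comm_word h @ (if h \<in> I then [(GZ, True)] else []) \<in> relators H I"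
    using h by (auto simp: relators_def)
  then have "cls H I (comm_word h) \<otimes>\<^bsub>Gpres H I\<^esub> ?t = \<one>\<^bsub>Gpres H I\<^esub>"
    using h cls_relator cls_append[of "comm_word h" "[(GZ, True)]"]
    by (cases "h \<in> I") (auto simp: zG_pow_def comm_word_def)
  moreover have "(aG \<otimes>\<^bsub>Gpres H I\<^esub> ?c) \<otimes>\<^bsub>Gpres H I\<^esub> (aG \<otimes>\<^bsub>Gpres H I\<^esub> ?c \<otimes>\<^bsub>Gpres H I\<^esub> ?t)
      = cls H I (comm_word h) \<otimes>\<^bsub>Gpres H I\<^esub> ?t"
    using h by (simp add: cls_comm_word G.m_assoc)
  ultimately have "(aG \<otimes>\<^bsub>Gpres H I\<^esub> ?c) \<otimes>\<^bsub>Gpres H I\<^esub> (aG \<otimes>\<^bsub>Gpres H I\<^esub> ?c \<otimes>\<^bsub>Gpres H I\<^esub> ?t)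
      = \<one>\<^bsub>Gpres H I\<^esub>"
    by simp
  then have "inv\<^bsub>Gpres H I\<^esub> (aG \<otimes>\<^bsub>Gpres H I\<^esub> ?c) = aG \<otimes>\<^bsub>Gpres H I\<^esub> ?c \<otimes>\<^bsub>Gpres H I\<^esub> ?t"
    using h by (intro G.inv_equality G.inv_comm[of "aG \<otimes>\<^bsub>Gpres H I\<^esub> ?c"]) simp_all
  moreover have "inv\<^bsub>Gpres H I\<^esub> aG = aG" "inv\<^bsub>Gpres H I\<^esub> ?c = ?c"
    using h by (simp_all add: G.inv_equality aG_square lamp_square)
  ultimately show ?thesis
    using h by (simp add: G.inv_mult_group)
qed

lemma lamp_letter:
  assumes l: "fst l \<in> gens H" and g: "g \<in> carrier H"
  shows "lamp g \<otimes>\<^bsub>Gpres H I\<^esub> cls H I [l]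
    = cls H I [l] \<otimes>\<^bsub>Gpres H I\<^esub> lamp (inv\<^bsub>H\<^esub> letter_val H l \<otimes>\<^bsub>H\<^esub> g)
      \<otimes>\<^bsub>Gpres H I\<^esub> zG_pow (fst l = GA \<and> g \<in> I)"
proof -
  obtain x b where lx: "l = (x, b)"
    by force
  show ?thesis
  proof (cases x)
    case (GH h)
    then have h: "h \<in> carrier H"
      using l lx by simp
    show ?thesis
    proof (cases b)
      case False
      then show ?thesis
        using lx GH h g lamp_hG by (simp add: zG_pow_def)
    next
      case True
      then show ?thesis
        using lx GH h g lamp_hG[of g "inv\<^bsub>H\<^esub> h"] by (simp add: zG_pow_def hG_inv)
    qed
  next
    case GA
    then show ?thesis
      using lx g lamp_aG by simp
  next
    case GZ
    then show ?thesis
      using lx g zG_central[of "lamp g"] by (simp add: zG_pow_def)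
  qed
qed

lemma lamp_word:
  assumes "valid_word H w" and g: "g \<in> carrier H"
  shows "lamp g \<otimes>\<^bsub>Gpres H I\<^esub> cls H I w
    = cls H I w \<otimes>\<^bsub>Gpres H I\<^esub> lamp (inv\<^bsub>H\<^esub> word_pi H w \<otimes>\<^bsub>H\<^esub> g)
      \<otimes>\<^bsub>Gpres H I\<^esub> zG_pow (odd (card {p \<in> word_supp H w. inv\<^bsub>H\<^esub> p \<otimes>\<^bsub>H\<^esub> g \<in> I}))"
  using assms(1)
proof (induction w rule: rev_induct)
  case Nil
  then show ?case
    using g by (simp add: zG_pow_def flip: one_Gpres)
next
  case (snoc l w)
  have w: "valid_word H w" and l: "fst l \<in> gens H"
    using snoc.prems by auto
  define g' where "g' = inv\<^bsub>H\<^esub> word_pi H w \<otimes>\<^bsub>H\<^esub> g"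
  define n where "n = odd (card {p \<in> word_supp H w. inv\<^bsub>H\<^esub> p \<otimes>\<^bsub>H\<^esub> g \<in> I})"
  define d where "d = (fst l = GA \<and> g' \<in> I)"
  have g': "g' \<in> carrier H"
    using w g by (simp add: g'_def word_pi_closed)
  have carrier: "cls H I w \<in> carrier (Gpres H I)" "cls H I [l] \<in> carrier (Gpres H I)"
    using w l by simp_all
  have pi: "inv\<^bsub>H\<^esub> word_pi H (w @ [l]) \<otimes>\<^bsub>H\<^esub> g = inv\<^bsub>H\<^esub> letter_val H l \<otimes>\<^bsub>H\<^esub> g'"
    using snoc.prems w l g
    by (simp add: word_pi_snoc g'_def word_pi_closed letter_val_closed H.inv_mult_group H.m_assoc)
  have count: "odd (card {p \<in> word_supp H (w @ [l]). inv\<^bsub>H\<^esub> p \<otimes>\<^bsub>H\<^esub> g \<in> I}) \<longleftrightarrow> d \<noteq> n"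
    using word_supp_snoc[OF snoc.prems] odd_card_filter_sym_diff_singleton[OF finite_word_supp[OF w]]
    by (auto simp: n_def d_def g'_def)
  have "lamp g \<otimes>\<^bsub>Gpres H I\<^esub> cls H I (w @ [l])
      = (lamp g \<otimes>\<^bsub>Gpres H I\<^esub> cls H I w) \<otimes>\<^bsub>Gpres H I\<^esub> cls H I [l]"
    using carrier g w l by (simp add: cls_append G.m_assoc)
  also have "\<dots> = cls H I w \<otimes>\<^bsub>Gpres H I\<^esub> lamp g' \<otimes>\<^bsub>Gpres H I\<^esub> zG_pow n \<otimes>\<^bsub>Gpres H I\<^esub> cls H I [l]"
    using snoc.IH[OF w] by (simp add: g'_def n_def)
  also have "\<dots> = cls H I w \<otimes>\<^bsub>Gpres H I\<^esub> (lamp g' \<otimes>\<^bsub>Gpres H I\<^esub> cls H I [l]) \<otimes>\<^bsub>Gpres H I\<^esub> zG_pow n"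
    using carrier g' by (simp add: G.m_assoc zG_pow_central)
  also have "\<dots> = cls H I (w @ [l]) \<otimes>\<^bsub>Gpres H I\<^esub> lamp (inv\<^bsub>H\<^esub> letter_val H l \<otimes>\<^bsub>H\<^esub> g')
      \<otimes>\<^bsub>Gpres H I\<^esub> (zG_pow d \<otimes>\<^bsub>Gpres H I\<^esub> zG_pow n)"
    using lamp_letter[OF l g'] carrier g' cls_append[of w "[l]"] w l
    by (simp add: G.m_assoc d_def letter_val_closed)
  finally show ?case
    by (simp only: pi count zG_pow_mult)
qed

lemma lamp_conj:
  assumes w: "valid_word H w" "word_pi H w = \<one>\<^bsub>H\<^esub>" and g: "g \<in> carrier H"
  shows "lamp g \<otimes>\<^bsub>Gpres H I\<^esub> cls H I w \<otimes>\<^bsub>Gpres H I\<^esub> inv\<^bsub>Gpres H I\<^esub> lamp g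
    = cls H I w \<otimes>\<^bsub>Gpres H I\<^esub> zG_pow (odd (card {p \<in> word_supp H w. inv\<^bsub>H\<^esub> p \<otimes>\<^bsub>H\<^esub> g \<in> I}))"
  using lamp_word[OF w(1) g] w g by (simp add: G.m_assoc zG_pow_central)

end

section \<open>A concrete model of the presented group\<close>

text \<open>A state \<open>(u, k, e)\<close> stands for the element with lamp set \<open>u\<close>, position \<open>k\<close> and
  central part \<open>z\<^sup>e\<close>; \<open>step\<close> multiplies by a letter on the right. Lighting the lamp at \<open>k\<close>
  flips the bit once for every lit lamp \<open>g\<close> that \<open>k\<close> precedes with \<open>g\<^sup>-\<^sup>1k \<in> I\<close>.\<close>

definition cocycle :: "('h, 'm) monoid_scheme \<Rightarrow> 'h set \<Rightarrow> 'h set \<Rightarrow> 'h set \<Rightarrow> bool" where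
  "cocycle H I = odd_pairs (\<lambda>g p. prec p g \<and> inv\<^bsub>H\<^esub> g \<otimes>\<^bsub>H\<^esub> p \<in> I)"

text \<open>The cocycle is not invariant under left translation by \<open>k\<close>: the defect on \<open>S\<close> is the
  parity of the pairs of \<open>S\<close> that count for the cocycle and whose order is reversed by \<open>k\<close>.\<close>

definition inversion_parity :: "('h, 'm) monoid_scheme \<Rightarrow> 'h set \<Rightarrow> 'h \<Rightarrow> 'h set \<Rightarrow> bool" where
  "inversion_parity H I k S \<longleftrightarrow>
    odd_pairs (\<lambda>g h. prec h g \<and> prec (k \<otimes>\<^bsub>H\<^esub> g) (k \<otimes>\<^bsub>H\<^esub> h) \<and> inv\<^bsub>H\<^esub> g \<otimes>\<^bsub>H\<^esub> h \<in> I) S S"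

fun step :: "('h, 'm) monoid_scheme \<Rightarrow> 'h set \<Rightarrow> 'h set \<times> 'h \<times> bool \<Rightarrow> 'h gen \<times> bool \<Rightarrow> 'h set \<times> 'h \<times> bool"
  where
  "step H I (u, k, e) (GH h, False) = (u, k \<otimes>\<^bsub>H\<^esub> h, e)"
| "step H I (u, k, e) (GH h, True) = (u, k \<otimes>\<^bsub>H\<^esub> inv\<^bsub>H\<^esub> h, e)"
| "step H I (u, k, e) (GA, _) = (sym_diff u {k}, k, e \<noteq> cocycle H I u {k})"
| "step H I (u, k, e) (GZ, _) = (u, k, \<not> e)"

definition run :: "('h, 'm) monoid_scheme \<Rightarrow> 'h set \<Rightarrow> 'h word \<Rightarrow> 'h set \<times> 'h \<times> bool \<Rightarrow> 'h set \<times> 'h \<times> bool"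
  where "run H I w s = foldl (step H I) s w"

lemma run_simps [simp]:
  "run H I [] s = s"
  "run H I (l # w) s = run H I w (step H I s l)"
  "run H I (v @ w) s = run H I w (run H I v s)"
  by (simp_all add: run_def)

definition central_bit :: "('h, 'm) monoid_scheme \<Rightarrow> 'h set \<Rightarrow> 'h word \<Rightarrow> bool" where
  "central_bit H I w = snd (snd (run H I w ({}, \<one>\<^bsub>H\<^esub>, False)))"

lemma cocycle_empty [simp]: "\<not> cocycle H I {} V" "\<not> cocycle H I U {}"
  by (simp_all add: cocycle_def)

lemma cocycle_sym_diff_left:
  "finite A \<Longrightarrow> finite B \<Longrightarrow> finite V \<Longrightarrow>
    cocycle H I (sym_diff A B) V \<longleftrightarrow> cocycle H I A V \<noteq> cocycle H I B V"
  unfolding cocycle_def by (rule odd_pairs_sym_diff_left)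

lemma cocycle_sym_diff_right:
  "finite U \<Longrightarrow> finite A \<Longrightarrow> finite B \<Longrightarrow>
    cocycle H I U (sym_diff A B) \<longleftrightarrow> cocycle H I U A \<noteq> cocycle H I U B"
  unfolding cocycle_def by (rule odd_pairs_sym_diff_right)

lemma cocycle_singleton_right:
  "cocycle H I U {p} \<longleftrightarrow> odd (card {g \<in> U. prec p g \<and> inv\<^bsub>H\<^esub> g \<otimes>\<^bsub>H\<^esub> p \<in> I})"
  by (simp add: cocycle_def odd_pairs_singleton_right)

locale sym_presentation = presentation +
  assumes one_notin: "\<one>\<^bsub>H\<^esub> \<notin> I"
    and inv_mem: "h \<in> I \<Longrightarrow> inv\<^bsub>H\<^esub> h \<in> I"
begin

lemma inv_mult_mem_swap:
  "g \<in> carrier H \<Longrightarrow> p \<in> carrier H \<Longrightarrow> inv\<^bsub>H\<^esub> p \<otimes>\<^bsub>H\<^esub> g \<in> I \<longleftrightarrow> inv\<^bsub>H\<^esub> g \<otimes>\<^bsub>H\<^esub> p \<in> I"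
  by (metis H.inv_closed H.inv_inv H.inv_mult_group inv_mem)

lemma cocycle_diagonal_singleton: "k \<in> carrier H \<Longrightarrow> \<not> cocycle H I {k} {k}"
  using one_notin by (simp add: cocycle_def)

lemma cocycle_antisym:
  assumes "finite A" "A \<subseteq> carrier H" "finite B" "B \<subseteq> carrier H"
  shows "cocycle H I A B \<noteq> cocycle H I B A \<longleftrightarrow> odd_pairs (\<lambda>g p. inv\<^bsub>H\<^esub> g \<otimes>\<^bsub>H\<^esub> p \<in> I) A B"
  unfolding cocycle_def
proof (rule odd_pairs_tournament_split)
  fix g p
  assume gp: "g \<in> A" "p \<in> B"
  then show "inv\<^bsub>H\<^esub> p \<otimes>\<^bsub>H\<^esub> g \<in> I \<longleftrightarrow> inv\<^bsub>H\<^esub> g \<otimes>\<^bsub>H\<^esub> p \<in> I"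
    using assms inv_mult_mem_swap[of g p] by blast
  show "inv\<^bsub>H\<^esub> g \<otimes>\<^bsub>H\<^esub> p \<in> I \<Longrightarrow> g \<noteq> p"
    using gp assms one_notin by auto
qed (use assms in auto)

lemma cocycle_lcos_singleton:
  assumes "S \<subseteq> carrier H" "q \<in> carrier H" "k \<in> carrier H"
  shows "cocycle H I (k <#\<^bsub>H\<^esub> S) {k \<otimes>\<^bsub>H\<^esub> q}
    \<longleftrightarrow> odd (card {g \<in> S. prec (k \<otimes>\<^bsub>H\<^esub> q) (k \<otimes>\<^bsub>H\<^esub> g) \<and> inv\<^bsub>H\<^esub> g \<otimes>\<^bsub>H\<^esub> q \<in> I})"
proof -
  have "inv\<^bsub>H\<^esub> (k \<otimes>\<^bsub>H\<^esub> g) \<otimes>\<^bsub>H\<^esub> (k \<otimes>\<^bsub>H\<^esub> q) = inv\<^bsub>H\<^esub> g \<otimes>\<^bsub>H\<^esub> q" if "g \<in> S" for g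
    using that assms by (simp add: subset_eq H.inv_mult_group H.m_assoc)
  then have "{g' \<in> k <#\<^bsub>H\<^esub> S. prec (k \<otimes>\<^bsub>H\<^esub> q) g' \<and> inv\<^bsub>H\<^esub> g' \<otimes>\<^bsub>H\<^esub> (k \<otimes>\<^bsub>H\<^esub> q) \<in> I}
      = (\<lambda>g. k \<otimes>\<^bsub>H\<^esub> g) ` {g \<in> S. prec (k \<otimes>\<^bsub>H\<^esub> q) (k \<otimes>\<^bsub>H\<^esub> g) \<and> inv\<^bsub>H\<^esub> g \<otimes>\<^bsub>H\<^esub> q \<in> I}"
    by (auto simp: l_coset_def)
  moreover have "inj_on (\<lambda>g. k \<otimes>\<^bsub>H\<^esub> g) S"
    using assms by (auto simp: inj_on_def subset_eq)
  ultimately show ?thesis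
    by (simp add: cocycle_singleton_right card_image inj_on_subset)
qed

lemma inversion_parity_empty [simp]: "\<not> inversion_parity H I k {}"
  by (simp add: inversion_parity_def)

lemma inversion_parity_one:
  assumes "S \<subseteq> carrier H"
  shows "\<not> inversion_parity H I \<one>\<^bsub>H\<^esub> S"
proof -
  have "inversion_parity H I \<one>\<^bsub>H\<^esub> S \<longleftrightarrow> odd_pairs (\<lambda>g h. False) S S"
    unfolding inversion_parity_def
  proof (rule odd_pairs_cong)
    fix g h
    assume "g \<in> S" "h \<in> S"
    then have carrier: "g \<in> carrier H" "h \<in> carrier H"
      using assms by blast+
    show "prec h g \<and> prec (\<one>\<^bsub>H\<^esub> \<otimes>\<^bsub>H\<^esub> g) (\<one>\<^bsub>H\<^esub> \<otimes>\<^bsub>H\<^esub> h) \<and> inv\<^bsub>H\<^esub> g \<otimes>\<^bsub>H\<^esub> h \<in> I \<longleftrightarrow> False"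
    proof (cases "g = h")
      case True
      then show ?thesis
        using carrier one_notin by simp
    next
      case False
      then show ?thesis
        using carrier prec_tournament[of g h] by simp
    qed
  qed
  then show ?thesis
    by (simp add: odd_pairs_def)
qed

lemma inversion_parity_sym_diff_singleton:
  assumes S: "finite S" "S \<subseteq> carrier H" and q: "q \<in> carrier H" and k: "k \<in> carrier H"
  shows "inversion_parity H I k (sym_diff S {q})
    \<longleftrightarrow> (inversion_parity H I k S \<noteq> cocycle H I (k <#\<^bsub>H\<^esub> S) {k \<otimes>\<^bsub>H\<^esub> q}) \<noteq> cocycle H I S {q}"
proof -
  define P where "P g h \<longleftrightarrow> prec h g \<and> prec (k \<otimes>\<^bsub>H\<^esub> g) (k \<otimes>\<^bsub>H\<^esub> h) \<and> inv\<^bsub>H\<^esub> g \<otimes>\<^bsub>H\<^esub> h \<in> I" for g h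
  define X where "X g \<longleftrightarrow> inv\<^bsub>H\<^esub> g \<otimes>\<^bsub>H\<^esub> q \<in> I" for g
  have "\<not> P q q"
    using q one_notin by (simp add: P_def)
  with S(1) have "inversion_parity H I k (sym_diff S {q})
      \<longleftrightarrow> inversion_parity H I k S \<noteq> (odd (card {g \<in> S. P g q}) \<noteq> odd (card {h \<in> S. P q h}))"
    unfolding inversion_parity_def P_def[symmetric] by (rule odd_pairs_diagonal_sym_diff_singleton)
  moreover have "odd (card {g \<in> S. P g q}) \<noteq> odd (card {h \<in> S. P q h})
      \<longleftrightarrow> odd (card {g \<in> S. P g q \<or> P q g})"
  proof -
    have "{g \<in> S. P g q \<or> P q g} = {g \<in> S. P g q} \<union> {h \<in> S. P q h}"
      by blast
    moreover have "g = q" if "P g q" "P q g" for g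
      using that prec_tournament[of g q] by (auto simp: P_def)
    then have "{g \<in> S. P g q} \<inter> {h \<in> S. P q h} = {}"
      using \<open>\<not> P q q\<close> by blast
    ultimately show ?thesis
      using S(1) by (simp add: odd_card_Un_disjoint)
  qed
  moreover have "{g \<in> S. P g q \<or> P q g}
      = {g \<in> S. (prec (k \<otimes>\<^bsub>H\<^esub> q) (k \<otimes>\<^bsub>H\<^esub> g) \<and> X g) \<noteq> (prec q g \<and> X g)}"
  proof (rule Collect_cong, rule conj_cong[OF HOL.refl])
    fix g
    assume "g \<in> S"
    then have g: "g \<in> carrier H"
      using S(2) by blast
    show "P g q \<or> P q g \<longleftrightarrow> (prec (k \<otimes>\<^bsub>H\<^esub> q) (k \<otimes>\<^bsub>H\<^esub> g) \<and> X g) \<noteq> (prec q g \<and> X g)"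
    proof (cases "g = q")
      case True
      then show ?thesis
        using q one_notin by (simp add: P_def X_def)
    next
      case False
      then have "k \<otimes>\<^bsub>H\<^esub> g \<noteq> k \<otimes>\<^bsub>H\<^esub> q"
        using g q k by simp
      then show ?thesis
        using False prec_tournament[of g q] prec_tournament[of "k \<otimes>\<^bsub>H\<^esub> g" "k \<otimes>\<^bsub>H\<^esub> q"]
          inv_mult_mem_swap[OF g q]
        by (auto simp: P_def X_def)
    qed
  qed
  moreover have "cocycle H I (k <#\<^bsub>H\<^esub> S) {k \<otimes>\<^bsub>H\<^esub> q} \<noteq> cocycle H I S {q}
      \<longleftrightarrow> odd (card {g \<in> S. (prec (k \<otimes>\<^bsub>H\<^esub> q) (k \<otimes>\<^bsub>H\<^esub> g) \<and> X g) \<noteq> (prec q g \<and> X g)})"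
    unfolding cocycle_lcos_singleton[OF S(2) q k]
    unfolding cocycle_singleton_right X_def
    by (rule odd_card_filter_neq[OF S(1), symmetric])
  ultimately show ?thesis
    by auto
qed

lemma step_GA_translate:
  assumes u: "finite u" and S: "finite S" "S \<subseteq> carrier H" and q: "q \<in> carrier H"
    and k: "k \<in> carrier H"
  shows "step H I (sym_diff u (k <#\<^bsub>H\<^esub> S), k \<otimes>\<^bsub>H\<^esub> q,
      ((e \<noteq> cocycle H I u (k <#\<^bsub>H\<^esub> S)) \<noteq> E) \<noteq> inversion_parity H I k S) (GA, b)
    = (sym_diff u (k <#\<^bsub>H\<^esub> sym_diff S {q}), k \<otimes>\<^bsub>H\<^esub> q,
      ((e \<noteq> cocycle H I u (k <#\<^bsub>H\<^esub> sym_diff S {q})) \<noteq> (E \<noteq> cocycle H I S {q}))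
        \<noteq> inversion_parity H I k (sym_diff S {q}))"
proof -
  let ?kS = "k <#\<^bsub>H\<^esub> S" and ?kq = "k \<otimes>\<^bsub>H\<^esub> q"
  have kS: "finite ?kS"
    using S(1) by (rule finite_lcos)
  have "k <#\<^bsub>H\<^esub> sym_diff S {q} = sym_diff ?kS {?kq}"
    using S(2) q k by (rule H.lcos_sym_diff_singleton)
  moreover have "cocycle H I u (sym_diff ?kS {?kq}) \<longleftrightarrow> cocycle H I u ?kS \<noteq> cocycle H I u {?kq}"
    using u kS by (simp add: cocycle_sym_diff_right)
  moreover have "cocycle H I (sym_diff u ?kS) {?kq} \<longleftrightarrow> cocycle H I u {?kq} \<noteq> cocycle H I ?kS {?kq}"
    using u kS by (simp add: cocycle_sym_diff_left)
  moreover have "sym_diff (sym_diff u ?kS) {?kq} = sym_diff u (sym_diff ?kS {?kq})"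
    by blast
  ultimately show ?thesis
    unfolding inversion_parity_sym_diff_singleton[OF S q k] by simp argo
qed

lemma run_word:
  assumes "valid_word H w" "finite u" "k \<in> carrier H"
  shows "run H I w (u, k, e) =
    (sym_diff u (k <#\<^bsub>H\<^esub> word_supp H w), k \<otimes>\<^bsub>H\<^esub> word_pi H w,
     ((e \<noteq> cocycle H I u (k <#\<^bsub>H\<^esub> word_supp H w)) \<noteq> central_bit H I w)
       \<noteq> inversion_parity H I k (word_supp H w))"
  using assms
proof (induction w arbitrary: u k e rule: rev_induct)
  case Nil
  then show ?case
    by (simp add: central_bit_def l_coset_def)
next
  case (snoc l w)
  have w: "valid_word H w" and l: "fst l \<in> gens H"
    using snoc.prems by auto
  define S where "S = word_supp H w"
  define q where "q = word_pi H w"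
  define E where "E = central_bit H I w"
  have S: "finite S" "S \<subseteq> carrier H" and q: "q \<in> carrier H"
    using w by (simp_all add: S_def q_def finite_word_supp word_supp_subset word_pi_closed)
  have "run H I w ({}, \<one>\<^bsub>H\<^esub>, False) = (S, q, E)"
    using snoc.IH[OF w, of "{}" "\<one>\<^bsub>H\<^esub>" False] S q
    by (simp add: S_def q_def E_def H.lcos_mult_one inversion_parity_one)
  then have central: "central_bit H I (w @ [l]) = snd (snd (step H I (S, q, E) l))"
    by (simp add: central_bit_def)
  have run: "run H I (w @ [l]) (u, k, e) = step H I (sym_diff u (k <#\<^bsub>H\<^esub> S), k \<otimes>\<^bsub>H\<^esub> q,
      ((e \<noteq> cocycle H I u (k <#\<^bsub>H\<^esub> S)) \<noteq> E) \<noteq> inversion_parity H I k S) l"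
    using snoc.IH[OF w snoc.prems(2,3)] by (simp add: S_def q_def E_def)
  obtain x b where x: "l = (x, b)"
    by force
  show ?case
  proof (cases x)
    case (GH h)
    then have "h \<in> carrier H"
      using l x by simp
    then show ?thesis
      using run central snoc.prems x GH q snoc.prems(3)
      by (cases b) (simp_all add: word_supp_snoc word_pi_snoc H.m_assoc S_def q_def E_def)
  next
    case GA
    have "word_supp H (w @ [l]) = sym_diff S {q}" "word_pi H (w @ [l]) = q"
      "central_bit H I (w @ [l]) \<longleftrightarrow> E \<noteq> cocycle H I S {q}"
      using word_supp_snoc[OF snoc.prems(1)] word_pi_snoc[OF snoc.prems(1)] central x GA q
      by (simp_all add: S_def q_def)
    then show ?thesis
      using run x GA step_GA_translate[OF snoc.prems(2) S q snoc.prems(3)] by simp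
  next
    case GZ
    then show ?thesis
      using run central x q snoc.prems(1,3)
      by (auto simp: word_supp_snoc word_pi_snoc S_def q_def E_def)
  qed
qed

lemma step_cancel:
  assumes "x \<in> gens H" "finite u" "k \<in> carrier H"
  shows "step H I (step H I (u, k, e) (x, b)) (x, \<not> b) = (u, k, e)"
proof (cases x)
  case (GH h)
  then show ?thesis
    using assms by (cases b) (simp_all add: H.m_assoc)
next
  case GA
  have "sym_diff (sym_diff u {k}) {k} = u"
    by blast
  moreover have "cocycle H I (sym_diff u {k}) {k} \<longleftrightarrow> cocycle H I u {k}"
    using assms(2,3) by (simp add: cocycle_sym_diff_left cocycle_diagonal_singleton)
  ultimately show ?thesis
    using GA by auto
next
  case GZ
  then show ?thesis
    by simp
qed

lemma run_comm_relator:
  assumes u: "finite u" and k: "k \<in> carrier H" and h: "h \<in> carrier H"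
  shows "run H I (comm_word h @ (if h \<in> I then [(GZ, True)] else [])) (u, k, e) = (u, k, e)"
proof -
  let ?kh = "k \<otimes>\<^bsub>H\<^esub> h"
  have kh: "?kh \<in> carrier H"
    using k h by simp
  have return: "?kh \<otimes>\<^bsub>H\<^esub> inv\<^bsub>H\<^esub> h = k"
    using k h by (simp add: H.m_assoc)
  have "run H I (comm_word h) (u, k, e) =
      (sym_diff (sym_diff (sym_diff (sym_diff u {k}) {?kh}) {k}) {?kh}, k,
       (((e \<noteq> cocycle H I u {k}) \<noteq> cocycle H I (sym_diff u {k}) {?kh})
         \<noteq> cocycle H I (sym_diff (sym_diff u {k}) {?kh}) {k})
         \<noteq> cocycle H I (sym_diff (sym_diff (sym_diff u {k}) {?kh}) {k}) {?kh})"
    by (simp only: comm_word_def run_simps step.simps return)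
  also have "\<dots> = (u, k, e \<noteq> (cocycle H I {k} {?kh} \<noteq> cocycle H I {?kh} {k}))"
  proof -
    have "sym_diff (sym_diff (sym_diff u {k}) {?kh}) {k} = sym_diff u {?kh}"
      "sym_diff (sym_diff u {?kh}) {?kh} = u"
      by blast+
    moreover have "cocycle H I (sym_diff u {k}) {?kh} \<longleftrightarrow> cocycle H I u {?kh} \<noteq> cocycle H I {k} {?kh}"
      "cocycle H I (sym_diff (sym_diff u {k}) {?kh}) {k}
        \<longleftrightarrow> (cocycle H I u {k} \<noteq> cocycle H I {k} {k}) \<noteq> cocycle H I {?kh} {k}"
      "cocycle H I (sym_diff u {?kh}) {?kh} \<longleftrightarrow> cocycle H I u {?kh} \<noteq> cocycle H I {?kh} {?kh}"
      using u by (simp_all add: cocycle_sym_diff_left)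
    ultimately show ?thesis
      using k kh by (simp add: cocycle_diagonal_singleton) argo
  qed
  also have "\<dots> = (u, k, e \<noteq> (h \<in> I))"
    using cocycle_antisym[of "{k}" "{?kh}"] k h by (simp add: odd_pairs_singleton H.m_assoc[symmetric])
  finally show ?thesis
    by (cases "h \<in> I") simp_all
qed

lemma run_relator:
  assumes "r \<in> relators H I" "finite u" "k \<in> carrier H"
  shows "run H I r (u, k, e) = (u, k, e)"
  using assms(1) unfolding relators_def
proof (elim UnE CollectE exE conjE insertE emptyE)
  fix g h
  assume "r = [(GH g, False), (GH h, False), (GH (g \<otimes>\<^bsub>H\<^esub> h), True)]" "g \<in> carrier H" "h \<in> carrier H"
  then show ?thesis
    using assms(3) by (simp add: H.m_assoc H.inv_mult_group)
next
  assume "r = [(GA, False), (GA, False)]"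
  then show ?thesis
    using step_cancel[of GA u k e False] assms(2,3) by simp
next
  fix x
  assume "r = [(GZ, False), (x, False), (GZ, True), (x, True)]" "x \<in> gens H"
  then show ?thesis
    using step_cancel[of x u k "\<not> e" False] step_cancel[of x u k e False] assms(2,3)
    by (cases x) simp_all
next
  fix h
  assume "r = comm_word h @ (if h \<in> I then [(GZ, True)] else [])" "h \<in> carrier H"
  then show ?thesis
    using run_comm_relator assms(2,3) by simp
qed simp

lemma run_from_one: "valid_word H w \<Longrightarrow> run H I w ({}, \<one>\<^bsub>H\<^esub>, False) = (word_supp H w, word_pi H w, central_bit H I w)"
  using run_word[of w "{}" "\<one>\<^bsub>H\<^esub>" False]
  by (simp add: H.lcos_mult_one word_supp_subset word_pi_closed inversion_parity_one)

lemma run_pres_eq: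
  assumes "pres_eq H I w w'" "finite L" "k \<in> carrier H"
  shows "run H I w (L, k, e) = run H I w' (L, k, e)"
  using assms
proof (induction arbitrary: L k e rule: pres_eq.induct)
  case (cancel u v x b)
  then show ?case
    by (simp add: run_word finite_word_supp word_pi_closed step_cancel)
next
  case (relator u v r)
  then show ?case
    by (simp add: run_word finite_word_supp word_pi_closed run_relator)
qed auto

lemma inverse_words_invariants:
  assumes c: "valid_word H wc" and d: "valid_word H wd" and inverse: "pres_eq H I (wc @ wd) []"
  shows "word_pi H wc <#\<^bsub>H\<^esub> word_supp H wd = word_supp H wc"
    and "\<not> (((central_bit H I wc \<noteq> cocycle H I (word_supp H wc) (word_supp H wc))
            \<noteq> central_bit H I wd) \<noteq> inversion_parity H I (word_pi H wc) (word_supp H wd))"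
proof -
  have "run H I wd (word_supp H wc, word_pi H wc, central_bit H I wc) = ({}, \<one>\<^bsub>H\<^esub>, False)"
    using run_pres_eq[OF inverse, of "{}" "\<one>\<^bsub>H\<^esub>" False] by (simp add: run_from_one[OF c])
  then have "sym_diff (word_supp H wc) (word_pi H wc <#\<^bsub>H\<^esub> word_supp H wd) = {}"
    and bit: "\<not> (((central_bit H I wc \<noteq> cocycle H I (word_supp H wc) (word_pi H wc <#\<^bsub>H\<^esub> word_supp H wd))
            \<noteq> central_bit H I wd) \<noteq> inversion_parity H I (word_pi H wc) (word_supp H wd))"
    using c d by (simp_all add: run_word finite_word_supp word_pi_closed)
  then show lamps: "word_pi H wc <#\<^bsub>H\<^esub> word_supp H wd = word_supp H wc"
    by blast
  show "\<not> (((central_bit H I wc \<noteq> cocycle H I (word_supp H wc) (word_supp H wc))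
            \<noteq> central_bit H I wd) \<noteq> inversion_parity H I (word_pi H wc) (word_supp H wd))"
    using bit lamps by simp
qed

lemma conjugate_words_invariants:
  assumes c: "valid_word H wc" and d: "valid_word H wd" and x: "valid_word H wx" "word_pi H wx = \<one>\<^bsub>H\<^esub>"
    and inverse: "pres_eq H I (wc @ wd) []"
    and conj: "pres_eq H I (wc @ wx @ wd) (wx @ [(GZ, False)])"
  shows "word_pi H wc <#\<^bsub>H\<^esub> word_supp H wx = word_supp H wx"
    and "cocycle H I (word_supp H wc) (word_supp H wx) \<noteq> cocycle H I (word_supp H wx) (word_supp H wc)
      \<longleftrightarrow> \<not> inversion_parity H I (word_pi H wc) (word_supp H wx)"
proof -
  define Sc Sx k where "Sc = word_supp H wc" and "Sx = word_supp H wx" and "k = word_pi H wc"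
  have fin: "finite Sc" "finite Sx" and k: "k \<in> carrier H"
    using c x by (simp_all add: Sc_def Sx_def k_def finite_word_supp word_pi_closed)
  note inverse_inv = inverse_words_invariants[OF c d inverse, folded Sc_def k_def]
  have "run H I (wc @ wx @ wd) ({}, \<one>\<^bsub>H\<^esub>, False)
      = run H I wd (run H I wx (Sc, k, central_bit H I wc))"
    by (simp only: run_simps run_from_one[OF c] Sc_def k_def)
  also have "\<dots> = (sym_diff (sym_diff Sc (k <#\<^bsub>H\<^esub> Sx)) Sc, k \<otimes>\<^bsub>H\<^esub> word_pi H wd,
      (((((central_bit H I wc \<noteq> cocycle H I Sc (k <#\<^bsub>H\<^esub> Sx)) \<noteq> central_bit H I wx)
          \<noteq> inversion_parity H I k Sx) \<noteq> cocycle H I (sym_diff Sc (k <#\<^bsub>H\<^esub> Sx)) Sc)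
          \<noteq> central_bit H I wd) \<noteq> inversion_parity H I k (word_supp H wd))"
    using d x inverse_inv(1) fin k by (simp add: run_word Sx_def)
  moreover have "run H I (wx @ [(GZ, False)]) ({}, \<one>\<^bsub>H\<^esub>, False) = (Sx, \<one>\<^bsub>H\<^esub>, \<not> central_bit H I wx)"
    using x by (simp add: run_from_one Sx_def)
  moreover have "run H I (wc @ wx @ wd) ({}, \<one>\<^bsub>H\<^esub>, False) = run H I (wx @ [(GZ, False)]) ({}, \<one>\<^bsub>H\<^esub>, False)"
    using conj by (rule run_pres_eq) simp_all
  ultimately have lamps: "sym_diff (sym_diff Sc (k <#\<^bsub>H\<^esub> Sx)) Sc = Sx"
    and bit: "((((((central_bit H I wc \<noteq> cocycle H I Sc (k <#\<^bsub>H\<^esub> Sx)) \<noteq> central_bit H I wx)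
          \<noteq> inversion_parity H I k Sx) \<noteq> cocycle H I (sym_diff Sc (k <#\<^bsub>H\<^esub> Sx)) Sc)
          \<noteq> central_bit H I wd) \<noteq> inversion_parity H I k (word_supp H wd)) \<longleftrightarrow> \<not> central_bit H I wx"
    by simp_all
  show fixed: "k <#\<^bsub>H\<^esub> Sx = Sx"
    using lamps by blast
  have "cocycle H I (sym_diff Sc Sx) Sc \<longleftrightarrow> cocycle H I Sc Sc \<noteq> cocycle H I Sx Sc"
    using fin by (simp add: cocycle_sym_diff_left)
  then show "cocycle H I Sc Sx \<noteq> cocycle H I Sx Sc \<longleftrightarrow> \<not> inversion_parity H I k Sx"
    using bit inverse_inv(2) by (simp add: fixed) argo
qed

lemma conj_zG_imp_odd_row:
  assumes tf: "torsion_free H" and x: "valid_word H wx" "word_pi H wx = \<one>\<^bsub>H\<^esub>"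
    and c: "c \<in> carrier (Gpres H I)"
    and conj: "c \<otimes>\<^bsub>Gpres H I\<^esub> cls H I wx \<otimes>\<^bsub>Gpres H I\<^esub> inv\<^bsub>Gpres H I\<^esub> c = cls H I wx \<otimes>\<^bsub>Gpres H I\<^esub> zG H I"
  shows "\<exists>g \<in> carrier H. odd (card {p \<in> word_supp H wx. inv\<^bsub>H\<^esub> g \<otimes>\<^bsub>H\<^esub> p \<in> I})"
proof -
  obtain wc where wc: "valid_word H wc" "c = cls H I wc"
    using c by (auto simp: carrier_Gpres)
  obtain wd where wd: "valid_word H wd" "inv\<^bsub>Gpres H I\<^esub> c = cls H I wd"
    using G.inv_closed[OF c] by (auto simp: carrier_Gpres)
  have "cls H I (wc @ wd) = c \<otimes>\<^bsub>Gpres H I\<^esub> inv\<^bsub>Gpres H I\<^esub> c"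
    using wc wd by (simp add: cls_append)
  also have "\<dots> = cls H I []"
    using c by (simp add: one_Gpres)
  finally have inverse: "pres_eq H I (wc @ wd) []"
    using wc wd by (simp add: cls_eq_iff)
  have "cls H I (wc @ wx @ wd) = c \<otimes>\<^bsub>Gpres H I\<^esub> cls H I wx \<otimes>\<^bsub>Gpres H I\<^esub> inv\<^bsub>Gpres H I\<^esub> c"
    using wc wd x by (simp add: cls_append G.m_assoc)
  also have "\<dots> = cls H I (wx @ [(GZ, False)])"
    using conj x by (simp add: cls_append)
  finally have "pres_eq H I (wc @ wx @ wd) (wx @ [(GZ, False)])"
    using wc wd x by (simp add: cls_eq_iff)
  note invariants = conjugate_words_invariants[OF wc(1) wd(1) x inverse this]
  define Sc Sx where "Sc = word_supp H wc" and "Sx = word_supp H wx"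
  have fin: "finite Sc" "finite Sx" and sub: "Sc \<subseteq> carrier H" "Sx \<subseteq> carrier H"
    using wc x by (simp_all add: Sc_def Sx_def finite_word_supp word_supp_subset)
  have "\<not> inversion_parity H I (word_pi H wc) Sx"
  proof (cases "Sx = {}")
    case False
    have "word_pi H wc = \<one>\<^bsub>H\<^esub>"
      using H.finite_lcos_fixed[OF tf fin(2) sub(2) word_pi_closed[OF wc(1)] False]
        invariants(1) by (simp add: Sx_def)
    then show ?thesis
      using sub(2) by (simp add: inversion_parity_one)
  qed simp
  then have "odd_pairs (\<lambda>g p. inv\<^bsub>H\<^esub> g \<otimes>\<^bsub>H\<^esub> p \<in> I) Sc Sx"
    using invariants(2) cocycle_antisym[OF fin(1) sub(1) fin(2) sub(2)] by (simp add: Sc_def Sx_def)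
  then obtain g where "g \<in> Sc" "odd (card {p \<in> Sx. inv\<^bsub>H\<^esub> g \<otimes>\<^bsub>H\<^esub> p \<in> I})"
    using odd_pairs_imp_odd_row[OF fin] by blast
  then show ?thesis
    using sub(1) by (auto simp: Sx_def)
qed

lemma odd_row_imp_conj_zG:
  assumes x: "valid_word H wx" "word_pi H wx = \<one>\<^bsub>H\<^esub>" and g: "g \<in> carrier H"
    and odd: "odd (card {p \<in> word_supp H wx. inv\<^bsub>H\<^esub> g \<otimes>\<^bsub>H\<^esub> p \<in> I})"
  shows "lamp g \<otimes>\<^bsub>Gpres H I\<^esub> cls H I wx \<otimes>\<^bsub>Gpres H I\<^esub> inv\<^bsub>Gpres H I\<^esub> lamp g = cls H I wx \<otimes>\<^bsub>Gpres H I\<^esub> zG H I"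
proof -
  have "{p \<in> word_supp H wx. inv\<^bsub>H\<^esub> p \<otimes>\<^bsub>H\<^esub> g \<in> I} = {p \<in> word_supp H wx. inv\<^bsub>H\<^esub> g \<otimes>\<^bsub>H\<^esub> p \<in> I}"
    using g word_supp_subset inv_mult_mem_swap by blast
  then show ?thesis
    using lamp_conj[OF x g] odd by (simp add: zG_pow_def)
qed


lemma conj_zG_iff_odd_row:
  assumes "torsion_free H" and x: "valid_word H wx" "word_pi H wx = \<one>\<^bsub>H\<^esub>"
  shows "(\<exists>c \<in> carrier (Gpres H I).
      c \<otimes>\<^bsub>Gpres H I\<^esub> cls H I wx \<otimes>\<^bsub>Gpres H I\<^esub> inv\<^bsub>Gpres H I\<^esub> c = cls H I wx \<otimes>\<^bsub>Gpres H I\<^esub> zG H I)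
    \<longleftrightarrow> (\<exists>g \<in> carrier H. odd (card {p \<in> word_supp H wx. inv\<^bsub>H\<^esub> g \<otimes>\<^bsub>H\<^esub> p \<in> I}))"
  using conj_zG_imp_odd_row[OF assms] odd_row_imp_conj_zG[OF x] generators_in_carrier(4) by blast

end

theorem mainTheorem2:
  fixes H :: "('h, 'm) monoid_scheme" and I :: "'h set" and x :: "'h word set"
  assumes "group H" and "torsion_free H"
    and "I \<subseteq> carrier H" and "\<one>\<^bsub>H\<^esub> \<notin> I" and "(\<lambda>h. inv\<^bsub>H\<^esub> h) ` I = I"
    and "x \<in> Npres H I"
  shows "(\<exists>c \<in> carrier (Gpres H I).
            c \<otimes>\<^bsub>Gpres H I\<^esub> x \<otimes>\<^bsub>Gpres H I\<^esub> inv\<^bsub>Gpres H I\<^esub> c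
              = x \<otimes>\<^bsub>Gpres H I\<^esub> zG H I)
         \<longleftrightarrow> (\<exists>g \<in> carrier H.
                odd (card ((\<lambda>s. inv\<^bsub>H\<^esub> g \<otimes>\<^bsub>H\<^esub> s) ` supp H x \<inter> I)))"
proof -
  interpret sym_presentation H I
  proof (intro sym_presentation.intro sym_presentation_axioms.intro presentation.intro)
    show "inv\<^bsub>H\<^esub> h \<in> I" if "h \<in> I" for h
      using that assms(5) by blast
  qed (use assms(1,4) in simp_all)
  obtain w where w: "valid_word H w" "x = cls H I w"
    using assms(6) by (auto simp: Npres_def carrier_Gpres)
  define wx where "wx = rep x"
  have wx: "valid_word H wx" "cls H I wx = x" "word_pi H wx = \<one>\<^bsub>H\<^esub>" "supp H x = word_supp H wx"
    using w assms(6) by (simp_all add: wx_def valid_rep_cls cls_rep_cls Npres_def piG_def supp_def)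
  have "card ((\<lambda>s. inv\<^bsub>H\<^esub> g \<otimes>\<^bsub>H\<^esub> s) ` supp H x \<inter> I)
      = card {p \<in> word_supp H wx. inv\<^bsub>H\<^esub> g \<otimes>\<^bsub>H\<^esub> p \<in> I}" if "g \<in> carrier H" for g
    using that by (simp add: wx(4) H.card_translate_Int word_supp_subset)
  then show ?thesis
    using conj_zG_iff_odd_row[OF assms(2) wx(1,3)] wx(2) by (metis (no_types, lifting))
qed

end
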